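(* For integers $4<m\le n$, the algebra $\mathtt{A}_n^{\{3,m\}}$ is wild.
   Context: $\Bbbk$ is an algebraically closed field; arrows compose right to left. $\mathtt{A}_n$ is the algebra of the quiver with vertices $1,\dots,n$, arrows $a_i:i\to i+1$, $b_i:i+1\to i$ ($1\le i\le n-1$), relations $a_ib_i=b_{i+1}a_{i+1}$ ($1\le i\le n-2$), $a_{n-1}b_{n-1}=0$. For $X\subset\{2,\dots,n\}$, $e_X$ is the sum of primitive idempotents for vertices in $\{1\}\cup X$ and $\mathtt{A}_n^X=e_X\mathtt{A}_ne_X$. *)

theory Defs
  imports "HOL-Computational_Algebra.Polynomial" "Jordan_Normal_Form.Matrix"
begin

definition alg_closed :: "'k::field itself \<Rightarrow> bool" where
  "alg_closed _ \<longleftrightarrow> (\<forall>p :: 'k poly. degree p \<ge> 1 \<longrightarrow> (\<exists>x. poly p x = 0))"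

text \<open>Arrows: (i, True) is a_i : i -> i+1, (i, False) is b_i : i+1 -> i.
  A path is a start vertex together with the list of arrows in order of traversal;
  (v, []) is the trivial path (primitive idempotent) at v.\<close>

type_synonym arrow = "nat \<times> bool"
type_synonym path = "nat \<times> arrow list"

fun arr_src :: "arrow \<Rightarrow> nat" where
  "arr_src (i, a) = (if a then i else Suc i)"

fun arr_tgt :: "arrow \<Rightarrow> nat" where
  "arr_tgt (i, a) = (if a then Suc i else i)"

fun walk_ok :: "nat \<Rightarrow> nat \<Rightarrow> arrow list \<Rightarrow> bool" where
  "walk_ok n v [] = (1 \<le> v \<and> v \<le> n)"
| "walk_ok n v (x # ws) =
     (1 \<le> fst x \<and> fst x < n \<and> arr_src x = v \<and> walk_ok n (arr_tgt x) ws)"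

fun walk_end :: "nat \<Rightarrow> arrow list \<Rightarrow> nat" where
  "walk_end v [] = v"
| "walk_end v (x # ws) = walk_end (arr_tgt x) ws"

definition valid_path :: "nat \<Rightarrow> path \<Rightarrow> bool" where
  "valid_path n p \<longleftrightarrow> walk_ok n (fst p) (snd p)"

definition path_alg :: "nat \<Rightarrow> (path \<Rightarrow> 'k::field) set" where
  "path_alg n = {f. finite {p. f p \<noteq> 0} \<and> (\<forall>p. f p \<noteq> 0 \<longrightarrow> valid_path n p)}"

text \<open>Multiplication; arrows compose right to left, so in pa_mult f g the path of g
  is traversed first.\<close>

definition pa_mult :: "(path \<Rightarrow> 'k::field) \<Rightarrow> (path \<Rightarrow> 'k) \<Rightarrow> path \<Rightarrow> 'k" where
  "pa_mult f g p = (\<Sum>i\<in>{0..length (snd p)}.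
      f (walk_end (fst p) (take i (snd p)), drop i (snd p)) * g (fst p, take i (snd p)))"

definition pa_add :: "(path \<Rightarrow> 'k::field) \<Rightarrow> (path \<Rightarrow> 'k) \<Rightarrow> path \<Rightarrow> 'k" where
  "pa_add f g = (\<lambda>p. f p + g p)"

definition pa_smult :: "'k::field \<Rightarrow> (path \<Rightarrow> 'k) \<Rightarrow> path \<Rightarrow> 'k" where
  "pa_smult c f = (\<lambda>p. c * f p)"

definition pa_path :: "path \<Rightarrow> path \<Rightarrow> 'k::field" where
  "pa_path q = (\<lambda>p. if p = q then 1 else 0)"

text \<open>Relations: a_i b_i - b_(i+1) a_(i+1) for 1 <= i <= n-2, and a_(n-1) b_(n-1).\<close>

definition relations :: "nat \<Rightarrow> (path \<Rightarrow> 'k::field) set" where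
  "relations n =
     {pa_add (pa_path (Suc i, [(i, False), (i, True)]))
             (pa_smult (-1) (pa_path (Suc i, [(Suc i, True), (Suc i, False)])))
       | i. 1 \<le> i \<and> i \<le> n - 2}
   \<union> {pa_path (n, [(n - 1, False), (n - 1, True)])}"

inductive_set rel_ideal :: "nat \<Rightarrow> (path \<Rightarrow> 'k::field) set" for n where
  gen: "r \<in> relations n \<Longrightarrow> r \<in> rel_ideal n"
| add: "f \<in> rel_ideal n \<Longrightarrow> g \<in> rel_ideal n \<Longrightarrow> pa_add f g \<in> rel_ideal n"
| smult: "f \<in> rel_ideal n \<Longrightarrow> pa_smult c f \<in> rel_ideal n"
| lmult: "f \<in> rel_ideal n \<Longrightarrow> valid_path n q \<Longrightarrow> pa_mult (pa_path q) f \<in> rel_ideal n"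
| rmult: "f \<in> rel_ideal n \<Longrightarrow> valid_path n q \<Longrightarrow> pa_mult f (pa_path q) \<in> rel_ideal n"

definition idem_X :: "nat set \<Rightarrow> path \<Rightarrow> 'k::field" where
  "idem_X X = (\<lambda>p. if p \<in> {(v, []) | v. v \<in> {1} \<union> X} then 1 else 0)"

text \<open>The algebra A_n^X = e_X A_n e_X is the quotient of
  this corner by its intersection with rel_ideal n; accordingly, algebra homomorphisms
  out of A_n^X are described as homomorphisms out of the corner that vanish on
  corner \<inter> rel_ideal n.\<close>

definition corner :: "nat \<Rightarrow> nat set \<Rightarrow> (path \<Rightarrow> 'k::field) set" where
  "corner n X = (\<lambda>f. pa_mult (idem_X X) (pa_mult f (idem_X X))) ` path_alg n"

text \<open>A noncommutative polynomial: coefficient function on words over {x,y}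
  (True = x, False = y), with finite support.\<close>

type_synonym 'k ncpoly = "bool list \<Rightarrow> 'k"

definition nc_poly :: "'k::field ncpoly \<Rightarrow> bool" where
  "nc_poly p \<longleftrightarrow> finite {w. p w \<noteq> 0}"

definition nc_mult :: "'k::field ncpoly \<Rightarrow> 'k ncpoly \<Rightarrow> 'k ncpoly" where
  "nc_mult p q = (\<lambda>w. \<Sum>i\<in>{0..length w}. p (take i w) * q (drop i w))"

definition nc_one :: "'k::field ncpoly" where
  "nc_one = (\<lambda>w. if w = [] then 1 else 0)"

fun word_mat :: "nat \<Rightarrow> 'k::field mat \<Rightarrow> 'k mat \<Rightarrow> bool list \<Rightarrow> 'k mat" where
  "word_mat r X Y [] = 1\<^sub>m r"
| "word_mat r X Y (b # w) = (if b then X else Y) * word_mat r X Y w"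

definition nc_eval :: "nat \<Rightarrow> 'k::field ncpoly \<Rightarrow> 'k mat \<Rightarrow> 'k mat \<Rightarrow> 'k mat" where
  "nc_eval r p X Y = mat r r (\<lambda>(i, j). \<Sum>w\<in>{w. p w \<noteq> 0}. p w * word_mat r X Y w $$ (i, j))"

text \<open>Finite-dimensional k<x,y>-modules: pairs (X, Y) of r x r matrices.\<close>

definition kxy_iso :: "nat \<Rightarrow> 'k::field mat \<Rightarrow> 'k mat \<Rightarrow> nat \<Rightarrow> 'k mat \<Rightarrow> 'k mat \<Rightarrow> bool" where
  "kxy_iso r X Y r' X' Y' \<longleftrightarrow> r = r' \<and>
     (\<exists>S \<in> carrier_mat r r. invertible_mat S \<and> S * X = X' * S \<and> S * Y = Y' * S)"

definition kxy_indec :: "nat \<Rightarrow> 'k::field mat \<Rightarrow> 'k mat \<Rightarrow> bool" where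
  "kxy_indec r X Y \<longleftrightarrow> r > 0 \<and>
     (\<forall>E \<in> carrier_mat r r. E * X = X * E \<and> E * Y = Y * E \<and> E * E = E
        \<longrightarrow> E = 0\<^sub>m r r \<or> E = 1\<^sub>m r)"

text \<open>A module of dimension D is given by the representing matrices rho f, f in the corner.\<close>

definition rep_iso :: "nat \<Rightarrow> nat set \<Rightarrow> nat \<Rightarrow> ((path \<Rightarrow> 'k::field) \<Rightarrow> 'k mat)
    \<Rightarrow> nat \<Rightarrow> ((path \<Rightarrow> 'k) \<Rightarrow> 'k mat) \<Rightarrow> bool" where
  "rep_iso n X D \<rho> D' \<rho>' \<longleftrightarrow> D = D' \<and>
     (\<exists>S \<in> carrier_mat D D. invertible_mat S \<and> (\<forall>f \<in> corner n X. S * \<rho> f = \<rho>' f * S))"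

definition rep_indec :: "nat \<Rightarrow> nat set \<Rightarrow> nat \<Rightarrow> ((path \<Rightarrow> 'k::field) \<Rightarrow> 'k mat) \<Rightarrow> bool" where
  "rep_indec n X D \<rho> \<longleftrightarrow> D > 0 \<and>
     (\<forall>E \<in> carrier_mat D D. (\<forall>f \<in> corner n X. E * \<rho> f = \<rho> f * E) \<and> E * E = E
        \<longrightarrow> E = 0\<^sub>m D D \<or> E = 1\<^sub>m D)"

text \<open>An A_n^X-k<x,y>-bimodule which is free of rank d as a right k<x,y>-module is the same
  as a unital algebra homomorphism Phi : A_n^X -> M_d(k<x,y>).\<close>

definition is_bimod :: "nat \<Rightarrow> nat set \<Rightarrow> nat
    \<Rightarrow> ((path \<Rightarrow> 'k::field) \<Rightarrow> nat \<Rightarrow> nat \<Rightarrow> 'k ncpoly) \<Rightarrow> bool" where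
  "is_bimod n X d \<Phi> \<longleftrightarrow>
     (\<forall>f \<in> corner n X. \<forall>i<d. \<forall>j<d. nc_poly (\<Phi> f i j)) \<and>
     (\<forall>f \<in> corner n X. \<forall>g \<in> corner n X. \<forall>i<d. \<forall>j<d.
         \<Phi> (pa_add f g) i j = (\<lambda>w. \<Phi> f i j w + \<Phi> g i j w)) \<and>
     (\<forall>c. \<forall>f \<in> corner n X. \<forall>i<d. \<forall>j<d.
         \<Phi> (pa_smult c f) i j = (\<lambda>w. c * \<Phi> f i j w)) \<and>
     (\<forall>f \<in> corner n X. \<forall>g \<in> corner n X. \<forall>i<d. \<forall>j<d.
         \<Phi> (pa_mult f g) i j = (\<lambda>w. \<Sum>l<d. nc_mult (\<Phi> f i l) (\<Phi> g l j) w)) \<and>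
     (\<forall>i<d. \<forall>j<d. \<Phi> (idem_X X) i j = (if i = j then nc_one else (\<lambda>w. 0))) \<and>
     (\<forall>f \<in> corner n X \<inter> rel_ideal n. \<forall>i<d. \<forall>j<d. \<Phi> f i j = (\<lambda>w. 0))"

text \<open>The module M \<otimes>_{k<x,y>} V for V = (k^r, X, Y): dimension d*r, with f acting by the
  block matrix (Phi f i j evaluated at (X, Y)).\<close>

definition tensor_rep :: "nat \<Rightarrow> ((path \<Rightarrow> 'k::field) \<Rightarrow> nat \<Rightarrow> nat \<Rightarrow> 'k ncpoly)
    \<Rightarrow> nat \<Rightarrow> 'k mat \<Rightarrow> 'k mat \<Rightarrow> (path \<Rightarrow> 'k) \<Rightarrow> 'k mat" where
  "tensor_rep d \<Phi> r X Y f = mat (d * r) (d * r)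
     (\<lambda>(i, j). nc_eval r (\<Phi> f (i div r) (j div r)) X Y $$ (i mod r, j mod r))"

text \<open>Wildness (Drozd): there is an A-k<x,y>-bimodule M, finitely generated free as a right
  k<x,y>-module, such that M \<otimes> - : mod k<x,y> -> mod A preserves indecomposability and
  reflects isomorphism (on finite-dimensional modules).\<close>

definition wild_corner :: "'k::field itself \<Rightarrow> nat \<Rightarrow> nat set \<Rightarrow> bool" where
  "wild_corner _ n X \<longleftrightarrow>
     (\<exists>d (\<Phi> :: (path \<Rightarrow> 'k) \<Rightarrow> nat \<Rightarrow> nat \<Rightarrow> 'k ncpoly). is_bimod n X d \<Phi> \<and>
        (\<forall>r X1 Y1. X1 \<in> carrier_mat r r \<longrightarrow> Y1 \<in> carrier_mat r r \<longrightarrow> kxy_indec r X1 Y1 \<longrightarrow>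
            rep_indec n X (d * r) (tensor_rep d \<Phi> r X1 Y1)) \<and>
        (\<forall>r X1 Y1 r' X2 Y2. X1 \<in> carrier_mat r r \<longrightarrow> Y1 \<in> carrier_mat r r \<longrightarrow>
            X2 \<in> carrier_mat r' r' \<longrightarrow> Y2 \<in> carrier_mat r' r' \<longrightarrow>
            rep_iso n X (d * r) (tensor_rep d \<Phi> r X1 Y1) (d * r') (tensor_rep d \<Phi> r' X2 Y2) \<longrightarrow>
            kxy_iso r X1 Y1 r' X2 Y2))"

end

theory Submission
  imports Defs
begin

text \<open>
  The bimodule M = k<x,y>^9 puts four summands at vertex 1, four at vertex 3 and one at
  vertex m.  The paths b1a1 (a loop at 1), a2a1 : 1 -> 3, b1b2 : 3 -> 1 and
  b_3 ... b_(m-1) : m -> 3 act by matrix units, and the loop a2b2 = b3a3 at 3 acts by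
  E_74 + x E_65 + y E_75.  An element of the relation ideal vanishes on every path containing
  no monomial of a relation, and its coefficients at a2b2 and b3a3 sum to zero; since M only
  reads off such coefficients, it is a module over A_n^X.

  Let S : M \<otimes> V -> M \<otimes> V' be a homomorphism, where V = (X, Y) and V' = (X', Y')
  are k<x,y>-modules.  Comparing S block by block with the action of the idempotents and of
  the paths above shows that S = 1 \<otimes> \<phi> + N, where N has nonzero blocks only at the
  positions (2|3, 0|1) and (6|7, 4|5), so that products of such parts vanish, and where \<phi>
  intertwines X with X' and Y with Y'.  Hence an idempotent endomorphism of M \<otimes> V is 0
  or 1 as soon as \<phi> is, and an isomorphism M \<otimes> V \<cong> M \<otimes> V' restricts to an
  isomorphism \<phi> : V \<cong> V'.
\<close>

section \<open>Paths avoiding the relations\<close>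

fun b_walk :: "nat \<Rightarrow> nat \<Rightarrow> arrow list" where
  "b_walk v 0 = []"
| "b_walk v (Suc k) = (v - 1, False) # b_walk (v - 1) k"

lemma b_walk_eq_Nil_iff [simp]: "b_walk v k = [] \<longleftrightarrow> k = 0"
  by (cases k) auto

lemma Nil_eq_b_walk_iff [simp]: "[] = b_walk v k \<longleftrightarrow> k = 0"
  by (cases k) auto

lemma length_b_walk [simp]: "length (b_walk v k) = k"
  by (induction k arbitrary: v) auto

lemma walk_end_take_b_walk: "i \<le> k \<Longrightarrow> walk_end v (take i (b_walk v k)) = v - i"
proof (induction k arbitrary: v i)
  case (Suc k)
  then show ?case by (cases i) auto
qed simp

lemma walk_end_b_walk: "walk_end v (b_walk v k) = v - k"
  using walk_end_take_b_walk[of k k v] by simp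

lemma walk_ok_b_walk: "k < v \<Longrightarrow> v \<le> n \<Longrightarrow> walk_ok n v (b_walk v k)"
  by (induction k arbitrary: v) auto

definition b1a1 :: path where "b1a1 = (1, [(1, True), (1, False)])"

definition a2a1 :: path where "a2a1 = (1, [(1, True), (2, True)])"

definition b1b2 :: path where "b1b2 = (3, [(2, False), (1, False)])"

definition a2b2 :: path where "a2b2 = (3, [(2, False), (2, True)])"

definition b3a3 :: path where "b3a3 = (3, [(3, True), (3, False)])"

definition b_chain :: "nat \<Rightarrow> path" where "b_chain m = (m, b_walk m (m - 3))"

lemmas named_paths = b1a1_def a2a1_def b1b2_def a2b2_def b3a3_def b_chain_def

text \<open>Traversing x and then y spells one of the monomials a_i b_i or b_i a_i (i \<ge> 2) of the
  relations; b_1 a_1 is the only product of two arrows with equal index that is no such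
  monomial.\<close>

fun relation_pair :: "arrow \<Rightarrow> arrow \<Rightarrow> bool" where
  "relation_pair x y \<longleftrightarrow> fst x = fst y \<and> (\<not> snd x \<and> snd y \<or> snd x \<and> \<not> snd y \<and> 2 \<le> fst x)"

definition relation_free :: "arrow list \<Rightarrow> bool" where
  "relation_free ws \<longleftrightarrow> successively (\<lambda>x y. \<not> relation_pair x y) ws"

lemma relation_free_take_drop:
  assumes "relation_free ws"
  shows "relation_free (take i ws)" "relation_free (drop i ws)"
  using assms successively_append_iff[of _ "take i ws" "drop i ws"]
  unfolding relation_free_def append_take_drop_id by blast+

lemma relation_free_b_walk: "relation_free (b_walk v k)"
proof -
  have "\<not> snd x" if "x \<in> set (b_walk v k)" for x
    using that by (induction k arbitrary: v) auto
  then show ?thesis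
    unfolding relation_free_def successively_conv_nth by (metis nth_mem relation_pair.simps Suc_lessD)
qed

lemma rel_ideal_vanishes_relation_free:
  assumes "f \<in> rel_ideal n" "relation_free (snd p)"
  shows "f p = 0"
  using assms
proof (induction arbitrary: p rule: rel_ideal.induct)
  case (gen r)
  then show ?case
    by (auto simp: relations_def relation_free_def pa_add_def pa_smult_def pa_path_def)
next
  case (lmult f q)
  show ?case
    unfolding pa_mult_def
    by (rule sum.neutral) (use lmult relation_free_take_drop in auto)
next
  case (rmult f q)
  show ?case
    unfolding pa_mult_def
    by (rule sum.neutral) (use rmult relation_free_take_drop in auto)
qed (simp_all add: pa_add_def pa_smult_def)

lemma sum_upto_2: "(\<Sum>i\<in>{0..2::nat}. F i) = F 0 + F 1 + F 2"
  by (simp add: numeral_2_eq_2 atLeast0_atMost_Suc add.commute add.left_commute)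

lemma rel_ideal_a2b2_plus_b3a3:
  assumes "f \<in> rel_ideal n" "n \<noteq> 3"
  shows "f a2b2 + f b3a3 = 0"
  using assms(1)
proof (induction rule: rel_ideal.induct)
  case (gen r)
  then show ?case
    using assms(2) by (auto simp: relations_def named_paths pa_add_def pa_smult_def pa_path_def)
next
  case (add f g)
  then show ?case by (simp add: pa_add_def algebra_simps)
next
  case (smult f c)
  then show ?case by (simp add: pa_smult_def flip: distrib_left)
next
  case (lmult f q)
  have "f (3, []) = 0" "f (3, [(2, False)]) = 0" "f (3, [(3, True)]) = 0"
    using lmult.hyps(1) by (auto intro!: rel_ideal_vanishes_relation_free simp: relation_free_def)
  then show ?case
    using lmult.IH by (simp add: pa_mult_def named_paths sum_upto_2 flip: distrib_left)
next
  case (rmult f q)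
  have "f (3, [(2, False)]) = 0" "f (2, [(2, True)]) = 0" "f (3, [(3, True)]) = 0"
    "f (4, [(3, False)]) = 0" "f (3, []) = 0"
    using rmult.hyps(1) by (auto intro!: rel_ideal_vanishes_relation_free simp: relation_free_def)
  then show ?case
    using rmult.IH by (simp add: pa_mult_def named_paths sum_upto_2 flip: distrib_right)
qed

lemma pa_mult_idem_X_right:
  "pa_mult h (idem_X X) (v, ws) = (if v \<in> insert 1 X then h (v, ws) else 0)"
proof -
  have "pa_mult h (idem_X X) (v, ws) =
      (\<Sum>i\<in>{0..length ws}. if i = 0 then (if v \<in> insert 1 X then h (v, ws) else 0) else 0)"
    unfolding pa_mult_def by (intro sum.cong) (auto simp: idem_X_def)
  then show ?thesis by simp
qed

lemma pa_mult_idem_X_left: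
  "pa_mult (idem_X X) h (v, ws) = (if walk_end v ws \<in> insert 1 X then h (v, ws) else 0)"
proof -
  have "pa_mult (idem_X X) h (v, ws) =
      (\<Sum>i\<in>{0..length ws}.
        if i = length ws then (if walk_end v ws \<in> insert 1 X then h (v, ws) else 0) else 0)"
    unfolding pa_mult_def by (intro sum.cong) (auto simp: idem_X_def)
  then show ?thesis by simp
qed

lemma corner_vanishes:
  assumes "f \<in> corner n X" "v \<notin> insert 1 X \<or> walk_end v ws \<notin> insert 1 X"
  shows "f (v, ws) = 0"
  using assms by (auto simp: corner_def pa_mult_idem_X_left pa_mult_idem_X_right)

lemma pa_path_in_corner:
  assumes "valid_path n (v, ws)" "v \<in> insert 1 X" "walk_end v ws \<in> insert 1 X"
  shows "pa_path (v, ws) \<in> corner n X"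
proof -
  have "pa_path (v, ws) \<in> path_alg n"
    using assms(1) by (simp add: path_alg_def pa_path_def)
  moreover have "pa_mult (idem_X X) (pa_mult (pa_path (v, ws)) (idem_X X)) = pa_path (v, ws)"
    using assms(2,3) by (auto simp: pa_mult_idem_X_left pa_mult_idem_X_right pa_path_def)
  ultimately show ?thesis
    unfolding corner_def by (metis image_eqI)
qed

lemma pa_mult_trivial_path: "pa_mult f g (v, []) = f (v, []) * g (v, [])"
  by (simp add: pa_mult_def)

lemma pa_mult_corner_ends:
  assumes "f \<in> corner n X" "g \<in> corner n X" "ws \<noteq> []"
    and "\<And>i. 0 < i \<Longrightarrow> i < length ws \<Longrightarrow> walk_end v (take i ws) \<notin> insert 1 X"
  shows "pa_mult f g (v, ws) = f (walk_end v ws, []) * g (v, ws) + f (v, ws) * g (v, [])"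
proof -
  have "pa_mult f g (v, ws) =
      (\<Sum>i\<in>{0, length ws}. f (walk_end v (take i ws), drop i ws) * g (v, take i ws))"
    unfolding pa_mult_def fst_conv snd_conv
  proof (rule sum.mono_neutral_right)
    show "\<forall>i\<in>{0..length ws} - {0, length ws}.
        f (walk_end v (take i ws), drop i ws) * g (v, take i ws) = 0"
      using assms corner_vanishes[OF assms(2)] by auto
  qed auto
  then show ?thesis
    using assms(3) by (simp add: add.commute)
qed

section \<open>Linear noncommutative polynomials\<close>

definition nc_linear :: "'k::field \<Rightarrow> 'k \<Rightarrow> 'k \<Rightarrow> 'k ncpoly" where
  "nc_linear a b c w = (if w = [] then a else if w = [True] then b else if w = [False] then c else 0)"

lemma nc_linear_support: "{w. nc_linear a b c w \<noteq> 0} \<subseteq> {[], [True], [False]}"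
  by (auto simp: nc_linear_def)

lemma nc_poly_nc_linear: "nc_poly (nc_linear a b c)"
  unfolding nc_poly_def by (rule finite_subset[OF nc_linear_support]) simp

lemma nc_linear_1_0_0: "nc_linear 1 0 0 = nc_one"
  by (auto simp: nc_linear_def nc_one_def)

lemma nc_linear_0_0_0: "nc_linear 0 0 0 = (\<lambda>w. 0)"
  by (auto simp: nc_linear_def)

lemma nc_linear_add:
  "(\<lambda>w. nc_linear a b c w + nc_linear a' b' c' w) = nc_linear (a + a') (b + b') (c + c')"
  by (auto simp: nc_linear_def)

lemma nc_linear_smult: "(\<lambda>w. s * nc_linear a b c w) = nc_linear (s * a) (s * b) (s * c)"
  by (auto simp: nc_linear_def)

lemma sum_nc_linear:
  "(\<lambda>w. \<Sum>l\<in>L. nc_linear (a l) (b l) (c l) w) = nc_linear (sum a L) (sum b L) (sum c L)"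
  by (auto simp: nc_linear_def)

lemma nc_linear_long: "2 \<le> length w \<Longrightarrow> nc_linear a b c w = 0"
  by (auto simp: nc_linear_def)

lemma nc_mult_nc_linear:
  assumes "b * b' = 0" "b * c' = 0" "c * b' = 0" "c * c' = 0"
  shows "nc_mult (nc_linear a b c) (nc_linear a' b' c') =
    nc_linear (a * a') (a * b' + b * a') (a * c' + c * a')"
proof
  fix w :: "bool list"
  consider "w = []" | x where "w = [x]" | x y where "w = [x, y]" | x y z u where "w = x # y # z # u"
    by (metis list.exhaust)
  then show "nc_mult (nc_linear a b c) (nc_linear a' b' c') w =
      nc_linear (a * a') (a * b' + b * a') (a * c' + c * a') w"
  proof cases
    case 3
    then show ?thesis
      using assms by (cases x; cases y) (simp_all add: nc_mult_def nc_linear_def sum_upto_2)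
  next
    case 4
    have "nc_linear a b c (take i w) * nc_linear a' b' c' (drop i w) = 0" for i
      using 4 by (cases "i \<le> 1") (simp_all add: nc_linear_long)
    then show ?thesis
      using 4 by (simp add: nc_mult_def nc_linear_long)
  qed (auto simp: nc_mult_def nc_linear_def)
qed

lemma nc_eval_nc_linear:
  assumes "X \<in> carrier_mat r r" "Y \<in> carrier_mat r r"
  shows "nc_eval r (nc_linear a b c) X Y = a \<cdot>\<^sub>m 1\<^sub>m r + b \<cdot>\<^sub>m X + c \<cdot>\<^sub>m Y"
proof (rule eq_matI)
  fix i j assume "i < dim_row (a \<cdot>\<^sub>m 1\<^sub>m r + b \<cdot>\<^sub>m X + c \<cdot>\<^sub>m Y)"
    "j < dim_col (a \<cdot>\<^sub>m 1\<^sub>m r + b \<cdot>\<^sub>m X + c \<cdot>\<^sub>m Y)"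
  then have ij: "i < r" "j < r" using assms by simp_all
  have "nc_eval r (nc_linear a b c) X Y $$ (i, j) =
      (\<Sum>w | nc_linear a b c w \<noteq> 0. nc_linear a b c w * word_mat r X Y w $$ (i, j))"
    using ij by (simp add: nc_eval_def)
  also have "\<dots> = (\<Sum>w\<in>{[], [True], [False]}. nc_linear a b c w * word_mat r X Y w $$ (i, j))"
    by (rule sum.mono_neutral_left) (use nc_linear_support in auto)
  finally show "nc_eval r (nc_linear a b c) X Y $$ (i, j) = (a \<cdot>\<^sub>m 1\<^sub>m r + b \<cdot>\<^sub>m X + c \<cdot>\<^sub>m Y) $$ (i, j)"
    using assms ij by (simp add: nc_linear_def)
qed (use assms in \<open>simp_all add: nc_eval_def\<close>)

section \<open>Block matrices\<close>

definition blk :: "nat \<Rightarrow> 'a mat \<Rightarrow> nat \<Rightarrow> nat \<Rightarrow> 'a mat" where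
  "blk r A b c = mat r r (\<lambda>(i, j). A $$ (b * r + i, c * r + j))"

lemma blk_carrier [simp]: "blk r A b c \<in> carrier_mat r r"
  and dim_blk [simp]: "dim_row (blk r A b c) = r" "dim_col (blk r A b c) = r"
  by (simp_all add: blk_def)

lemma index_blk [simp]: "i < r \<Longrightarrow> j < r \<Longrightarrow> blk r A b c $$ (i, j) = A $$ (b * r + i, c * r + j)"
  by (simp add: blk_def)

lemma block_index_less: "b < d \<Longrightarrow> i < r \<Longrightarrow> b * r + i < d * (r::nat)"
proof -
  assume "b < d" "i < r"
  then have "b * r + i < Suc b * r" by simp
  also have "\<dots> \<le> d * r" using \<open>b < d\<close> by (intro mult_right_mono) auto
  finally show ?thesis .
qed

lemma index_blk_mult:
  assumes "A \<in> carrier_mat (d * r) (d * r)" "B \<in> carrier_mat (d * r) (d * r)"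
    and "b < d" "c < d" "i < r" "j < r"
  shows "blk r (A * B) b c $$ (i, j) = (\<Sum>b'<d. (blk r A b b' * blk r B b' c) $$ (i, j))"
proof -
  have "blk r (A * B) b c $$ (i, j) = (\<Sum>t<d * r. A $$ (b * r + i, t) * B $$ (t, c * r + j))"
    using assms block_index_less[of b d i r] block_index_less[of c d j r]
    by (simp add: scalar_prod_def atLeast0LessThan)
  also have "\<dots> = (\<Sum>b'<d. \<Sum>l\<in>{b' * r..<b' * r + r}. A $$ (b * r + i, l) * B $$ (l, c * r + j))"
    by (rule sum.nat_group[symmetric])
  also have "\<dots> = (\<Sum>b'<d. (blk r A b b' * blk r B b' c) $$ (i, j))"
    using assms(5,6) by (simp add: scalar_prod_def atLeast0LessThan sum.atLeastLessThan_shift_0 add.commute)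
  finally show ?thesis .
qed

lemma mat_eq_by_blocks:
  assumes "A \<in> carrier_mat (d * r) (d * r)" "B \<in> carrier_mat (d * r) (d * r)"
    and "\<And>b c. b < d \<Longrightarrow> c < d \<Longrightarrow> blk r A b c = blk r B b c"
  shows "A = B"
proof (rule eq_matI)
  fix i j assume "i < dim_row B" "j < dim_col B"
  then have ij: "i < d * r" "j < d * r" using assms(2) by auto
  then have "0 < r" by (cases r) auto
  then have "A $$ (i, j) = blk r A (i div r) (j div r) $$ (i mod r, j mod r)"
    "B $$ (i, j) = blk r B (i div r) (j div r) $$ (i mod r, j mod r)"
    by (simp_all add: mult.commute)
  moreover have "i div r < d" "j div r < d"
    using ij by (simp_all add: less_mult_imp_div_less)
  ultimately show "A $$ (i, j) = B $$ (i, j)" using assms(3) by simp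
qed (use assms in auto)

lemma blk_zero_mat: "b < d \<Longrightarrow> c < d \<Longrightarrow> blk r (0\<^sub>m (d * r) (d * r)) b c = 0\<^sub>m r r"
  by (rule eq_matI) (simp_all add: block_index_less)

lemma block_index_eq_iff:
  "i < r \<Longrightarrow> j < r \<Longrightarrow> b * r + i = c * r + j \<longleftrightarrow> b = c \<and> i = (j::nat)"
  by (metis add_diff_cancel_left' div_mult_self1 div_less mod_div_mult_eq mod_mult_self1 mod_less
        add.right_neutral add_cancel_right_left gr_implies_not0 add.commute)

lemma blk_one_mat:
  "b < d \<Longrightarrow> c < d \<Longrightarrow> blk r (1\<^sub>m (d * r)) b c = (if b = c then 1\<^sub>m r else 0\<^sub>m r r)"
  by (rule eq_matI) (auto simp: block_index_less block_index_eq_iff)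

lemma blk_tensor_rep:
  "b < d \<Longrightarrow> c < d \<Longrightarrow> blk r (tensor_rep d \<Phi> r X Y f) b c = nc_eval r (\<Phi> f b c) X Y"
  by (rule eq_matI) (simp_all add: tensor_rep_def nc_eval_def block_index_less)

lemma tensor_rep_carrier: "tensor_rep d \<Phi> r X Y f \<in> carrier_mat (d * r) (d * r)"
  by (simp add: tensor_rep_def)

lemma mult_pencil_right:
  fixes M :: "'a::comm_ring_1 mat"
  assumes "M \<in> carrier_mat r r" "X \<in> carrier_mat r r" "Y \<in> carrier_mat r r"
  shows "M * (a \<cdot>\<^sub>m 1\<^sub>m r + b \<cdot>\<^sub>m X + c \<cdot>\<^sub>m Y) = a \<cdot>\<^sub>m M + b \<cdot>\<^sub>m (M * X) + c \<cdot>\<^sub>m (M * Y)"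
  using assms
  by (simp add: mult_add_distrib_mat[where nr = r and n = r and nc = r]
      mult_smult_distrib[where nr = r and n = r and nc = r])

lemma mult_pencil_left:
  fixes M :: "'a::comm_ring_1 mat"
  assumes "M \<in> carrier_mat r r" "X \<in> carrier_mat r r" "Y \<in> carrier_mat r r"
  shows "(a \<cdot>\<^sub>m 1\<^sub>m r + b \<cdot>\<^sub>m X + c \<cdot>\<^sub>m Y) * M = a \<cdot>\<^sub>m M + b \<cdot>\<^sub>m (X * M) + c \<cdot>\<^sub>m (Y * M)"
  using assms
  by (simp add: add_mult_distrib_mat[where nr = r and n = r and nc = r]
      mult_smult_assoc_mat[where nr = r and n = r and nc = r])

text \<open>A block-shaped matrix is I_d \<otimes> \<phi> plus blocks at off-diagonal positions allowed by P.
  For chain-free P the extra blocks multiply to zero, so \<phi> = blk r A 0 0 is multiplicative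
  and an idempotent of this shape is 0 or 1 as soon as \<phi> is.\<close>

definition block_shaped :: "(nat \<Rightarrow> nat \<Rightarrow> bool) \<Rightarrow> nat \<Rightarrow> nat \<Rightarrow> 'a::zero mat \<Rightarrow> bool" where
  "block_shaped P d r A \<longleftrightarrow> (\<forall>b<d. blk r A b b = blk r A 0 0) \<and>
     (\<forall>b<d. \<forall>c<d. b \<noteq> c \<longrightarrow> \<not> P b c \<longrightarrow> blk r A b c = 0\<^sub>m r r)"

definition chain_free :: "(nat \<Rightarrow> nat \<Rightarrow> bool) \<Rightarrow> bool" where
  "chain_free P \<longleftrightarrow> (\<forall>b b' c. P b b' \<longrightarrow> \<not> P b' c)"

lemma block_shaped_product_vanishes:
  assumes "block_shaped P d r A" "block_shaped P d r B" "chain_free P"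
    and "b < d" "b' < d" "c < d" "b' \<noteq> b" "b' \<noteq> c"
  shows "blk r A b b' * blk r B b' c = 0\<^sub>m r r"
proof (cases "P b b'")
  case True
  then have "\<not> P b' c"
    using assms(3) unfolding chain_free_def by blast
  then have "blk r B b' c = 0\<^sub>m r r"
    using assms(2,5,6,8) unfolding block_shaped_def by blast
  then show ?thesis by simp
next
  case False
  then have "blk r A b b' = 0\<^sub>m r r"
    using assms(1,4,5,7) unfolding block_shaped_def by blast
  then show ?thesis by simp
qed

lemma block_shaped_blk_mult:
  assumes "A \<in> carrier_mat (d * r) (d * r)" "B \<in> carrier_mat (d * r) (d * r)"
    and "block_shaped P d r A" "block_shaped P d r B" "chain_free P" "0 < d"
  shows "blk r (A * B) 0 0 = blk r A 0 0 * blk r B 0 0"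
proof (rule eq_matI)
  fix i j assume "i < dim_row (blk r A 0 0 * blk r B 0 0)" "j < dim_col (blk r A 0 0 * blk r B 0 0)"
  then have ij: "i < r" "j < r" by simp_all
  have "blk r (A * B) 0 0 $$ (i, j) = (\<Sum>b'<d. (blk r A 0 b' * blk r B b' 0) $$ (i, j))"
    using index_blk_mult[OF assms(1,2,6,6) ij] .
  also have "\<dots> = (blk r A 0 0 * blk r B 0 0) $$ (i, j)"
  proof (rule sum.mono_neutral_right[where S = "{0}", THEN trans])
    show "\<forall>b'\<in>{..<d} - {0}. (blk r A 0 b' * blk r B b' 0) $$ (i, j) = 0"
      using block_shaped_product_vanishes[OF assms(3-5) assms(6)] ij by auto
  qed (use assms(6) in auto)
  finally show "blk r (A * B) 0 0 $$ (i, j) = (blk r A 0 0 * blk r B 0 0) $$ (i, j)" .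
qed simp_all

lemma block_shaped_square_blk:
  assumes E: "E \<in> carrier_mat (d * r) (d * r)" and shaped: "block_shaped P d r E"
    and P: "chain_free P" and bc: "b < d" "c < d" "b \<noteq> c"
  shows "blk r (E * E) b c = blk r E 0 0 * blk r E b c + blk r E b c * blk r E 0 0"
proof (rule eq_matI)
  fix i j assume "i < dim_row (blk r E 0 0 * blk r E b c + blk r E b c * blk r E 0 0)"
    "j < dim_col (blk r E 0 0 * blk r E b c + blk r E b c * blk r E 0 0)"
  then have ij: "i < r" "j < r" by simp_all
  have diag: "blk r E b b = blk r E 0 0" "blk r E c c = blk r E 0 0"
    using shaped bc unfolding block_shaped_def by blast+
  have "blk r (E * E) b c $$ (i, j) = (\<Sum>b'<d. (blk r E b b' * blk r E b' c) $$ (i, j))"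
    using index_blk_mult[OF E E bc(1,2) ij] .
  also have "\<dots> = (\<Sum>b'\<in>{b, c}. (blk r E b b' * blk r E b' c) $$ (i, j))"
    by (rule sum.mono_neutral_right)
      (use bc ij block_shaped_product_vanishes[OF shaped shaped P] in auto)
  also have "\<dots> = (blk r E 0 0 * blk r E b c + blk r E b c * blk r E 0 0) $$ (i, j)"
    using bc ij by (simp del: index_blk add: diag)
  finally show "blk r (E * E) b c $$ (i, j) =
      (blk r E 0 0 * blk r E b c + blk r E b c * blk r E 0 0) $$ (i, j)" .
qed simp_all

lemma block_shaped_idempotent:
  fixes E :: "'a::comm_ring_1 mat"
  assumes E: "E \<in> carrier_mat (d * r) (d * r)" and shaped: "block_shaped P d r E"
    and P: "chain_free P" and idem: "E * E = E"
    and diag0: "blk r E 0 0 = 0\<^sub>m r r \<or> blk r E 0 0 = 1\<^sub>m r"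
  shows "E = 0\<^sub>m (d * r) (d * r) \<or> E = 1\<^sub>m (d * r)"
proof -
  define \<phi> where "\<phi> = blk r E 0 0"
  have off: "blk r E b c = 0\<^sub>m r r" if bc: "b < d" "c < d" "b \<noteq> c" for b c
  proof -
    let ?M = "blk r E b c"
    have "?M = \<phi> * ?M + ?M * \<phi>"
      using block_shaped_square_blk[OF E shaped P bc] idem unfolding \<phi>_def by simp
    then have "?M = 0\<^sub>m r r \<or> ?M = ?M + ?M"
      using diag0 unfolding \<phi>_def[symmetric] by auto
    then show ?thesis
    proof
      assume double: "?M = ?M + ?M"
      show ?thesis
      proof (rule eq_matI)
        fix i j assume "i < dim_row (0\<^sub>m r r :: 'a mat)" "j < dim_col (0\<^sub>m r r :: 'a mat)"
        then show "?M $$ (i, j) = 0\<^sub>m r r $$ (i, j)"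
          using arg_cong[where f = "\<lambda>A. A $$ (i, j)", OF double] by (simp del: index_blk)
      qed simp_all
    qed
  qed
  have diag: "blk r E b b = \<phi>" if "b < d" for b
    using shaped that unfolding block_shaped_def \<phi>_def by blast
  have blocks: "blk r E b c = (if b = c then \<phi> else 0\<^sub>m r r)" if "b < d" "c < d" for b c
    using diag[of b] off[of b c] that by (cases "b = c") simp_all
  from diag0 show ?thesis
    unfolding \<phi>_def[symmetric]
  proof
    assume "\<phi> = 0\<^sub>m r r"
    then have "E = 0\<^sub>m (d * r) (d * r)"
      by (intro mat_eq_by_blocks[OF E]) (simp_all add: blk_zero_mat blocks)
    then show ?thesis ..
  next
    assume "\<phi> = 1\<^sub>m r"
    then have "E = 1\<^sub>m (d * r)"
      by (intro mat_eq_by_blocks[OF E]) (simp_all add: blk_one_mat blocks)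
    then show ?thesis ..
  qed
qed

lemma invertible_matE:
  assumes "invertible_mat S" "S \<in> carrier_mat k k"
  obtains B where "B \<in> carrier_mat k k" "S * B = 1\<^sub>m k" "B * S = 1\<^sub>m k"
proof -
  from assms(1) obtain B where SB: "S * B = 1\<^sub>m (dim_row S)" and BS: "B * S = 1\<^sub>m (dim_row B)"
    unfolding invertible_mat_def inverts_mat_def by blast
  have "dim_col B = k"
    using arg_cong[OF SB, of dim_col] assms(2) by simp
  moreover have "dim_row B = k"
    using arg_cong[OF BS, of dim_col] assms(2) by simp
  ultimately show ?thesis
    using that SB BS assms(2) by auto
qed

lemma invertible_matI:
  assumes "A \<in> carrier_mat k k" "B \<in> carrier_mat k k" "A * B = 1\<^sub>m k" "B * A = 1\<^sub>m k"
  shows "invertible_mat A"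
  using assms unfolding invertible_mat_def inverts_mat_def square_mat.simps by auto

lemma inverse_intertwines:
  fixes S :: "'a::semiring_1 mat"
  assumes S: "S \<in> carrier_mat k k" and B: "B \<in> carrier_mat k k"
    and T: "T \<in> carrier_mat k k" and T': "T' \<in> carrier_mat k k"
    and SB: "S * B = 1\<^sub>m k" and BS: "B * S = 1\<^sub>m k" and ST: "S * T = T' * S"
  shows "B * T' = T * B"
proof -
  have "B * T' = B * T' * (S * B)"
    using right_mult_one_mat[OF mult_carrier_mat[OF B T']] SB by simp
  also have "\<dots> = B * (T' * S) * B"
    using assoc_mult_mat[OF mult_carrier_mat[OF B T'] S B] assoc_mult_mat[OF B T' S] by simp
  also have "\<dots> = B * S * T * B"
    using assoc_mult_mat[OF B S T] ST by simp
  also have "\<dots> = T * B"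
    using BS T by simp
  finally show ?thesis .
qed

section \<open>The bimodule\<close>

lemma sum_lessThan_9:
  "(\<Sum>l<9::nat. F l) = F 0 + F 1 + F 2 + F 3 + F 4 + F 5 + F 6 + F 7 + (F 8 :: 'a::comm_monoid_add)"
  by (simp add: eval_nat_numeral add.assoc)

lemma all_lessThan_9:
  "(\<forall>b<9::nat. P b) \<longleftrightarrow> P 0 \<and> P 1 \<and> P 2 \<and> P 3 \<and> P 4 \<and> P 5 \<and> P 6 \<and> P 7 \<and> P 8"
  by (simp add: eval_nat_numeral less_Suc_eq) blast

locale corner_3_m =
  fixes m n :: nat
  assumes m_gt_4: "4 < m" and m_le_n: "m \<le> n"
begin

lemma b_chain_nontrivial: "b_chain m \<noteq> (v, [])"
  using m_gt_4 by (simp add: b_chain_def)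

lemma m_neq: "m \<noteq> 1" "m \<noteq> Suc 0" "m \<noteq> 2" "m \<noteq> 3" "m \<noteq> 4" "\<not> m \<le> 3"
  using m_gt_4 by simp_all

lemma named_paths_in_corner:
  "pa_path (1, []) \<in> corner n {3, m}" "pa_path (3, []) \<in> corner n {3, m}"
  "pa_path b1a1 \<in> corner n {3, m}" "pa_path a2a1 \<in> corner n {3, m}"
  "pa_path b1b2 \<in> corner n {3, m}" "pa_path a2b2 \<in> corner n {3, m}"
  "pa_path (b_chain m) \<in> corner n {3, m}"
  using m_gt_4 m_le_n
  by (auto simp: named_paths valid_path_def walk_end_b_walk intro!: pa_path_in_corner walk_ok_b_walk)

lemma corner_mult_named_paths:
  assumes f: "f \<in> corner n {3, m}" and g: "g \<in> corner n {3, m}"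
  shows "pa_mult f g b1a1 = f (1, []) * g b1a1 + f b1a1 * g (1, [])"
    "pa_mult f g a2a1 = f (3, []) * g a2a1 + f a2a1 * g (1, [])"
    "pa_mult f g b1b2 = f (1, []) * g b1b2 + f b1b2 * g (3, [])"
    "pa_mult f g a2b2 = f (3, []) * g a2b2 + f a2b2 * g (3, [])"
    "pa_mult f g b3a3 = f (3, []) * g b3a3 + f b3a3 * g (3, [])"
    "pa_mult f g (b_chain m) = f (3, []) * g (b_chain m) + f (b_chain m) * g (m, [])"
  unfolding named_paths
  by (subst pa_mult_corner_ends[OF f g];
      use m_gt_4 in \<open>auto simp: less_Suc_eq walk_end_take_b_walk walk_end_b_walk\<close>)+

text \<open>Summands 0-3 of the bimodule k<x,y>^9 sit at vertex 1, summands 4-7 at vertex 3 and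
  summand 8 at vertex m; entry (b, c) of the matrix of f is
  scalar_coeff f b c + x_coeff f b c x + y_coeff f b c y.\<close>

definition scalar_coeff :: "(path \<Rightarrow> 'k::field) \<Rightarrow> nat \<Rightarrow> nat \<Rightarrow> 'k" where
  "scalar_coeff f b c =
    (if b = c then (if b < 4 then f (1, []) else if b < 8 then f (3, []) else f (m, []))
     else if (b, c) \<in> {(2, 0), (3, 1)} then f b1a1
     else if (b, c) \<in> {(6, 0), (7, 1)} then f a2a1
     else if (b, c) \<in> {(2, 4), (3, 5)} then f b1b2
     else if (b, c) = (7, 4) then f a2b2 + f b3a3
     else if (b, c) = (6, 8) then f (b_chain m)
     else 0)"

definition x_coeff :: "(path \<Rightarrow> 'k::field) \<Rightarrow> nat \<Rightarrow> nat \<Rightarrow> 'k" where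
  "x_coeff f b c = (if (b, c) = (6, 5) then f a2b2 + f b3a3 else 0)"

definition y_coeff :: "(path \<Rightarrow> 'k::field) \<Rightarrow> nat \<Rightarrow> nat \<Rightarrow> 'k" where
  "y_coeff f b c = (if (b, c) = (7, 5) then f a2b2 + f b3a3 else 0)"

definition wild_bimod :: "(path \<Rightarrow> 'k::field) \<Rightarrow> nat \<Rightarrow> nat \<Rightarrow> 'k ncpoly" where
  "wild_bimod f b c = nc_linear (scalar_coeff f b c) (x_coeff f b c) (y_coeff f b c)"

lemmas coeff_simps = scalar_coeff_def x_coeff_def y_coeff_def pa_path_def named_paths
  m_neq m_neq(1-5)[symmetric] sum_lessThan_9

lemma scalar_coeff_mult:
  assumes "f \<in> corner n {3, m}" "g \<in> corner n {3, m}" "b < 9" "c < 9"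
  shows "scalar_coeff (pa_mult f g) b c = (\<Sum>l<9. scalar_coeff f b l * scalar_coeff g l c)"
proof -
  have "\<forall>b<9. \<forall>c<9. scalar_coeff (pa_mult f g) b c = (\<Sum>l<9. scalar_coeff f b l * scalar_coeff g l c)"
    unfolding all_lessThan_9
    by (simp add: sum_lessThan_9 scalar_coeff_def corner_mult_named_paths[OF assms(1,2)]
        pa_mult_trivial_path algebra_simps)
  then show ?thesis using assms(3,4) by blast
qed

lemma x_coeff_mult:
  assumes "f \<in> corner n {3, m}" "g \<in> corner n {3, m}" "b < 9" "c < 9"
  shows "x_coeff (pa_mult f g) b c =
    (\<Sum>l<9. scalar_coeff f b l * x_coeff g l c + x_coeff f b l * scalar_coeff g l c)"
proof -
  have "\<forall>b<9. \<forall>c<9. x_coeff (pa_mult f g) b c =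
      (\<Sum>l<9. scalar_coeff f b l * x_coeff g l c + x_coeff f b l * scalar_coeff g l c)"
    unfolding all_lessThan_9
    by (simp add: sum_lessThan_9 scalar_coeff_def x_coeff_def corner_mult_named_paths[OF assms(1,2)]
        pa_mult_trivial_path algebra_simps)
  then show ?thesis using assms(3,4) by blast
qed

lemma y_coeff_mult:
  assumes "f \<in> corner n {3, m}" "g \<in> corner n {3, m}" "b < 9" "c < 9"
  shows "y_coeff (pa_mult f g) b c =
    (\<Sum>l<9. scalar_coeff f b l * y_coeff g l c + y_coeff f b l * scalar_coeff g l c)"
proof -
  have "\<forall>b<9. \<forall>c<9. y_coeff (pa_mult f g) b c =
      (\<Sum>l<9. scalar_coeff f b l * y_coeff g l c + y_coeff f b l * scalar_coeff g l c)"
    unfolding all_lessThan_9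
    by (simp add: sum_lessThan_9 scalar_coeff_def y_coeff_def corner_mult_named_paths[OF assms(1,2)]
        pa_mult_trivial_path algebra_simps)
  then show ?thesis using assms(3,4) by blast
qed

lemma wild_bimod_mult:
  assumes "f \<in> corner n {3, m}" "g \<in> corner n {3, m}" "b < 9" "c < 9"
  shows "wild_bimod (pa_mult f g) b c = (\<lambda>w. \<Sum>l<9. nc_mult (wild_bimod f b l) (wild_bimod g l c) w)"
proof -
  have "nc_mult (wild_bimod f b l) (wild_bimod g l c) =
      nc_linear (scalar_coeff f b l * scalar_coeff g l c)
        (scalar_coeff f b l * x_coeff g l c + x_coeff f b l * scalar_coeff g l c)
        (scalar_coeff f b l * y_coeff g l c + y_coeff f b l * scalar_coeff g l c)" for l
    unfolding wild_bimod_def by (rule nc_mult_nc_linear) (auto simp: x_coeff_def y_coeff_def)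
  then show ?thesis
    using assms by (simp add: sum_nc_linear wild_bimod_def scalar_coeff_mult x_coeff_mult y_coeff_mult)
qed

lemma coeffs_add:
  "scalar_coeff (pa_add f g) b c = scalar_coeff f b c + scalar_coeff g b c"
  "x_coeff (pa_add f g) b c = x_coeff f b c + x_coeff g b c"
  "y_coeff (pa_add f g) b c = y_coeff f b c + y_coeff g b c"
  by (simp_all add: scalar_coeff_def x_coeff_def y_coeff_def pa_add_def)

lemma coeffs_smult:
  "scalar_coeff (pa_smult s f) b c = s * scalar_coeff f b c"
  "x_coeff (pa_smult s f) b c = s * x_coeff f b c"
  "y_coeff (pa_smult s f) b c = s * y_coeff f b c"
  by (simp_all add: scalar_coeff_def x_coeff_def y_coeff_def pa_smult_def algebra_simps)

lemma wild_bimod_add: "wild_bimod (pa_add f g) b c = (\<lambda>w. wild_bimod f b c w + wild_bimod g b c w)"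
  by (simp add: wild_bimod_def nc_linear_add coeffs_add)

lemma wild_bimod_smult: "wild_bimod (pa_smult s f) b c = (\<lambda>w. s * wild_bimod f b c w)"
  by (simp add: wild_bimod_def nc_linear_smult coeffs_smult)

lemma wild_bimod_unit:
  "b < 9 \<Longrightarrow> c < 9 \<Longrightarrow> wild_bimod (idem_X {3, m}) b c = (if b = c then nc_one else (\<lambda>w. 0))"
  using b_chain_nontrivial m_gt_4
  by (auto simp: wild_bimod_def scalar_coeff_def x_coeff_def y_coeff_def idem_X_def named_paths
      nc_linear_1_0_0 nc_linear_0_0_0)

lemma wild_bimod_rel_ideal:
  assumes "f \<in> rel_ideal n"
  shows "wild_bimod f b c = (\<lambda>w. 0)"
proof -
  have "f (v, []) = 0" "f b1a1 = 0" "f a2a1 = 0" "f b1b2 = 0" for v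
    using assms by (auto intro!: rel_ideal_vanishes_relation_free simp: named_paths relation_free_def)
  moreover have "f (b_chain m) = 0"
    using assms relation_free_b_walk by (auto intro!: rel_ideal_vanishes_relation_free simp: b_chain_def)
  moreover have "f a2b2 + f b3a3 = 0"
    using rel_ideal_a2b2_plus_b3a3[OF assms] m_gt_4 m_le_n by simp
  ultimately show ?thesis
    by (simp add: wild_bimod_def scalar_coeff_def x_coeff_def y_coeff_def nc_linear_0_0_0)
qed

lemma is_bimod_wild_bimod: "is_bimod n {3, m} 9 wild_bimod"
  unfolding is_bimod_def
  by (simp add: wild_bimod_def nc_poly_nc_linear wild_bimod_add[unfolded wild_bimod_def]
      wild_bimod_smult[unfolded wild_bimod_def] wild_bimod_mult[unfolded wild_bimod_def]
      wild_bimod_unit[unfolded wild_bimod_def] wild_bimod_rel_ideal[unfolded wild_bimod_def])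

abbreviation wild_rep :: "nat \<Rightarrow> 'k::field mat \<Rightarrow> 'k mat \<Rightarrow> (path \<Rightarrow> 'k) \<Rightarrow> 'k mat" where
  "wild_rep r X Y \<equiv> tensor_rep 9 wild_bimod r X Y"

lemma blk_wild_rep:
  assumes "X \<in> carrier_mat r r" "Y \<in> carrier_mat r r" "b < 9" "c < 9"
  shows "blk r (wild_rep r X Y f) b c =
    scalar_coeff f b c \<cdot>\<^sub>m 1\<^sub>m r + x_coeff f b c \<cdot>\<^sub>m X + y_coeff f b c \<cdot>\<^sub>m Y"
  using assms by (simp add: blk_tensor_rep wild_bimod_def nc_eval_nc_linear)

lemma coeffs_vertex_1:
  "scalar_coeff (pa_path (1, [])) b c = (if b = c then if b < 4 then 1 else 0 else 0)"
  "x_coeff (pa_path (1, [])) b c = 0" "y_coeff (pa_path (1, [])) b c = 0"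
  using m_gt_4 b_chain_nontrivial[of 1, symmetric]
  by (auto simp: scalar_coeff_def x_coeff_def y_coeff_def pa_path_def named_paths)

lemma coeffs_vertex_3:
  "scalar_coeff (pa_path (3, [])) b c = (if b = c then if 4 \<le> b \<and> b < 8 then 1 else 0 else 0)"
  "x_coeff (pa_path (3, [])) b c = 0" "y_coeff (pa_path (3, [])) b c = 0"
  using m_gt_4 b_chain_nontrivial[of 3, symmetric]
  by (auto simp: scalar_coeff_def x_coeff_def y_coeff_def pa_path_def named_paths)

end

section \<open>Homomorphisms between the tensor products\<close>

lemma less_9_cases:
  "b < 9 \<Longrightarrow> b = 0 \<or> b = 1 \<or> b = 2 \<or> b = 3 \<or> b = 4 \<or> b = 5 \<or> b = 6 \<or> b = 7 \<or> b = (8::nat)"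
  by auto

definition free_block :: "nat \<Rightarrow> nat \<Rightarrow> bool" where
  "free_block b c \<longleftrightarrow> b \<in> {2, 3} \<and> c \<in> {0, 1} \<or> b \<in> {6, 7} \<and> c \<in> {4, 5}"

lemma chain_free_free_block: "chain_free free_block"
  by (auto simp: chain_free_def free_block_def)

lemma non_free_blocks_same_vertex:
  assumes "b < 9" "c < 9" "b \<noteq> c" "\<not> free_block b c"
    and "(b < 4) = (c < 4)" "(4 \<le> b \<and> b < 8) = (4 \<le> c \<and> c < 8)"
  shows "(b, c) \<in> {(0, 1), (1, 0), (0, 2), (1, 2), (0, 3), (1, 3), (2, 3), (3, 2),
    (4, 5), (5, 4), (4, 6), (5, 6), (4, 7), (5, 7), (6, 7), (7, 6)}"
  using less_9_cases[OF assms(1)] less_9_cases[OF assms(2)] assms(3-6)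
  by (elim disjE) (simp_all add: free_block_def)

locale wild_intertwiner = corner_3_m +
  fixes r :: nat and X Y X' Y' S :: "'k::field mat"
  assumes X: "X \<in> carrier_mat r r" and Y: "Y \<in> carrier_mat r r"
    and X': "X' \<in> carrier_mat r r" and Y': "Y' \<in> carrier_mat r r"
    and S: "S \<in> carrier_mat (9 * r) (9 * r)"
    and intertwines: "\<And>f. f \<in> corner n {3, m} \<Longrightarrow> S * wild_rep r X Y f = wild_rep r X' Y' f * S"
begin

abbreviation S_blk :: "nat \<Rightarrow> nat \<Rightarrow> 'k mat" where
  "S_blk b c \<equiv> blk r S b c"

lemma intertwiner_blk_eq:
  assumes "f \<in> corner n {3, m}" "b < 9" "c < 9" "i < r" "j < r"
  shows "(\<Sum>b'<9. scalar_coeff f b' c * S_blk b b' $$ (i, j) + x_coeff f b' c * (S_blk b b' * X) $$ (i, j)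
            + y_coeff f b' c * (S_blk b b' * Y) $$ (i, j)) =
    (\<Sum>b'<9. scalar_coeff f b b' * S_blk b' c $$ (i, j) + x_coeff f b b' * (X' * S_blk b' c) $$ (i, j)
            + y_coeff f b b' * (Y' * S_blk b' c) $$ (i, j))"
proof -
  have "(\<Sum>b'<9. scalar_coeff f b' c * S_blk b b' $$ (i, j) + x_coeff f b' c * (S_blk b b' * X) $$ (i, j)
            + y_coeff f b' c * (S_blk b b' * Y) $$ (i, j)) =
      (\<Sum>b'<9. (S_blk b b' * blk r (wild_rep r X Y f) b' c) $$ (i, j))"
    using assms X Y by (intro sum.cong) (simp_all add: blk_wild_rep mult_pencil_right)
  also have "\<dots> = blk r (S * wild_rep r X Y f) b c $$ (i, j)"
    by (rule index_blk_mult[OF S tensor_rep_carrier assms(2-5), symmetric])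
  also have "\<dots> = blk r (wild_rep r X' Y' f * S) b c $$ (i, j)"
    using intertwines[OF assms(1)] by simp
  also have "\<dots> = (\<Sum>b'<9. (blk r (wild_rep r X' Y' f) b b' * S_blk b' c) $$ (i, j))"
    by (rule index_blk_mult[OF tensor_rep_carrier S assms(2-5)])
  also have "\<dots> = (\<Sum>b'<9. scalar_coeff f b b' * S_blk b' c $$ (i, j) + x_coeff f b b' * (X' * S_blk b' c) $$ (i, j)
            + y_coeff f b b' * (Y' * S_blk b' c) $$ (i, j))"
    using assms X' Y' by (intro sum.cong) (simp_all add: blk_wild_rep mult_pencil_left)
  finally show ?thesis .
qed

lemma blk_e1_e3:
  assumes "b < 9" "c < 9" "i < r" "j < r"
  shows "(if c < 4 then S_blk b c $$ (i, j) else 0) = (if b < 4 then S_blk b c $$ (i, j) else 0)"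
    "(if 4 \<le> c \<and> c < 8 then S_blk b c $$ (i, j) else 0) =
      (if 4 \<le> b \<and> b < 8 then S_blk b c $$ (i, j) else 0)"
  using intertwiner_blk_eq[OF named_paths_in_corner(1) assms]
    intertwiner_blk_eq[OF named_paths_in_corner(2) assms] assms
  by (simp_all add: coeffs_vertex_1 coeffs_vertex_1[unfolded One_nat_def] coeffs_vertex_3
      if_distrib[of "\<lambda>x. x * _"] sum.delta sum.delta' cong: if_cong del: index_blk)

lemma blk_separates_vertices:
  assumes "b < 9" "c < 9" "(b < 4) \<noteq> (c < 4) \<or> (4 \<le> b \<and> b < 8) \<noteq> (4 \<le> c \<and> c < 8)"
  shows "S_blk b c = 0\<^sub>m r r"
proof (rule eq_matI)
  fix i j assume "i < dim_row (0\<^sub>m r r :: 'k mat)" "j < dim_col (0\<^sub>m r r :: 'k mat)"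
  then have ij: "i < r" "j < r" by simp_all
  show "S_blk b c $$ (i, j) = 0\<^sub>m r r $$ (i, j)"
    using assms(3) blk_e1_e3[OF assms(1,2) ij] ij by (auto simp del: index_blk split: if_splits)
qed simp_all

lemma blk_b1a1:
  "S_blk 2 2 = S_blk 0 0" "S_blk 3 3 = S_blk 1 1" "S_blk 0 2 = 0\<^sub>m r r" "S_blk 1 2 = 0\<^sub>m r r"
  "S_blk 0 3 = 0\<^sub>m r r" "S_blk 1 3 = 0\<^sub>m r r" "S_blk 3 2 = S_blk 1 0" "S_blk 2 3 = S_blk 0 1"
  using intertwiner_blk_eq[OF named_paths_in_corner(3), of 2 0]
    intertwiner_blk_eq[OF named_paths_in_corner(3), of 3 1]
    intertwiner_blk_eq[OF named_paths_in_corner(3), of 0 0]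
    intertwiner_blk_eq[OF named_paths_in_corner(3), of 1 0]
    intertwiner_blk_eq[OF named_paths_in_corner(3), of 0 1]
    intertwiner_blk_eq[OF named_paths_in_corner(3), of 1 1]
    intertwiner_blk_eq[OF named_paths_in_corner(3), of 3 0]
    intertwiner_blk_eq[OF named_paths_in_corner(3), of 2 1]
  by (auto intro!: eq_matI simp: coeff_simps simp del: index_blk)

lemma blk_a2a1:
  "S_blk 6 6 = S_blk 0 0" "S_blk 7 7 = S_blk 1 1" "S_blk 4 6 = 0\<^sub>m r r" "S_blk 5 6 = 0\<^sub>m r r"
  "S_blk 4 7 = 0\<^sub>m r r" "S_blk 5 7 = 0\<^sub>m r r" "S_blk 7 6 = S_blk 1 0" "S_blk 6 7 = S_blk 0 1"
  using intertwiner_blk_eq[OF named_paths_in_corner(4), of 6 0]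
    intertwiner_blk_eq[OF named_paths_in_corner(4), of 7 1]
    intertwiner_blk_eq[OF named_paths_in_corner(4), of 4 0]
    intertwiner_blk_eq[OF named_paths_in_corner(4), of 5 0]
    intertwiner_blk_eq[OF named_paths_in_corner(4), of 4 1]
    intertwiner_blk_eq[OF named_paths_in_corner(4), of 5 1]
    intertwiner_blk_eq[OF named_paths_in_corner(4), of 7 0]
    intertwiner_blk_eq[OF named_paths_in_corner(4), of 6 1]
  by (auto intro!: eq_matI simp: coeff_simps simp del: index_blk)

lemma blk_b1b2:
  "S_blk 2 2 = S_blk 4 4" "S_blk 3 3 = S_blk 5 5" "S_blk 3 2 = S_blk 5 4" "S_blk 2 3 = S_blk 4 5"
  using intertwiner_blk_eq[OF named_paths_in_corner(5), of 2 4]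
    intertwiner_blk_eq[OF named_paths_in_corner(5), of 3 5]
    intertwiner_blk_eq[OF named_paths_in_corner(5), of 3 4]
    intertwiner_blk_eq[OF named_paths_in_corner(5), of 2 5]
  by (auto intro!: eq_matI simp: coeff_simps simp del: index_blk)

lemma blk_b_chain:
  "S_blk 6 6 = S_blk 8 8" "S_blk 7 6 = 0\<^sub>m r r"
  using intertwiner_blk_eq[OF named_paths_in_corner(7), of 6 8]
    intertwiner_blk_eq[OF named_paths_in_corner(7), of 7 8]
  by (auto intro!: eq_matI simp: coeff_simps simp del: index_blk)

lemma blk_a2b2:
  "S_blk 6 7 = X' * S_blk 5 4" "S_blk 7 7 = S_blk 4 4 + Y' * S_blk 5 4"
  "S_blk 6 6 * X + S_blk 6 7 * Y = X' * S_blk 5 5"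
  "S_blk 7 6 * X + S_blk 7 7 * Y = S_blk 4 5 + Y' * S_blk 5 5"
  using intertwiner_blk_eq[OF named_paths_in_corner(6), of 6 4]
    intertwiner_blk_eq[OF named_paths_in_corner(6), of 7 4]
    intertwiner_blk_eq[OF named_paths_in_corner(6), of 6 5]
    intertwiner_blk_eq[OF named_paths_in_corner(6), of 7 5]
  by (auto intro!: eq_matI simp: coeff_simps carrier_matD[OF X] carrier_matD[OF Y]
      carrier_matD[OF X'] carrier_matD[OF Y'] simp del: index_blk)

text \<open>The block S_76 = 0 forced by b_chain m propagates around the blocks 10, 32, 54, 67, 01,
  23, 45 through the equations of b1a1, b1b2, a2b2 and a2a1.\<close>

lemma intertwiner_cycle_vanishes:
  "S_blk 1 0 = 0\<^sub>m r r" "S_blk 5 4 = 0\<^sub>m r r" "S_blk 6 7 = 0\<^sub>m r r" "S_blk 4 5 = 0\<^sub>m r r"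
proof -
  show z10: "S_blk 1 0 = 0\<^sub>m r r" using blk_a2a1(7) blk_b_chain(2) by simp
  show z54: "S_blk 5 4 = 0\<^sub>m r r" using blk_b1b2(3) blk_b1a1(7) z10 by simp
  show z67: "S_blk 6 7 = 0\<^sub>m r r" using blk_a2b2(1) z54 X' by simp
  show "S_blk 4 5 = 0\<^sub>m r r" using blk_b1b2(4) blk_b1a1(8) blk_a2a1(8) z67 by simp
qed

lemma intertwiner_diag: "b < 9 \<Longrightarrow> S_blk b b = S_blk 0 0"
proof -
  have "S_blk 7 7 = S_blk 4 4"
    using blk_a2b2(2) intertwiner_cycle_vanishes(2) Y' by simp
  moreover assume "b < 9"
  ultimately show ?thesis
    using less_9_cases blk_b1a1(1,2) blk_a2a1(1,2) blk_b1b2(1,2) blk_b_chain(1) by auto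
qed

lemma intertwiner_off_diag:
  assumes "b < 9" "c < 9" "b \<noteq> c" "\<not> free_block b c"
  shows "S_blk b c = 0\<^sub>m r r"
proof (cases "(b < 4) \<noteq> (c < 4) \<or> (4 \<le> b \<and> b < 8) \<noteq> (4 \<le> c \<and> c < 8)")
  case True
  then show ?thesis using blk_separates_vertices[OF assms(1,2)] by simp
next
  case False
  then have "(b, c) \<in> {(0, 1), (1, 0), (0, 2), (1, 2), (0, 3), (1, 3), (2, 3), (3, 2),
      (4, 5), (5, 4), (4, 6), (5, 6), (4, 7), (5, 7), (6, 7), (7, 6)}"
    using non_free_blocks_same_vertex[OF assms] by simp
  then show ?thesis
    using blk_b1a1(3-8) blk_a2a1(3-8) blk_b1b2(3,4) blk_b_chain(2) intertwiner_cycle_vanishes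
    by auto
qed

lemma intertwiner_shape:
  "block_shaped free_block 9 r S" "S_blk 0 0 * X = X' * S_blk 0 0" "S_blk 0 0 * Y = Y' * S_blk 0 0"
proof -
  show "block_shaped free_block 9 r S"
    unfolding block_shaped_def using intertwiner_diag intertwiner_off_diag
    by (intro conjI allI impI) assumption+
  have "S_blk 0 0 * X = S_blk 6 6 * X + S_blk 6 7 * Y"
    using intertwiner_diag[of 6] intertwiner_cycle_vanishes(3)
      right_add_zero_mat[OF mult_carrier_mat[OF blk_carrier X]] Y by simp
  also have "\<dots> = X' * S_blk 0 0"
    using blk_a2b2(3) intertwiner_diag[of 5] by simp
  finally show "S_blk 0 0 * X = X' * S_blk 0 0" .
  have "S_blk 0 0 * Y = S_blk 7 6 * X + S_blk 7 7 * Y"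
    using intertwiner_diag[of 7] blk_b_chain(2)
      left_add_zero_mat[OF mult_carrier_mat[OF blk_carrier Y]] X by simp
  also have "\<dots> = Y' * S_blk 0 0"
    using blk_a2b2(4) intertwiner_diag[of 5] intertwiner_cycle_vanishes(4)
      left_add_zero_mat[OF mult_carrier_mat[OF Y' blk_carrier]] by simp
  finally show "S_blk 0 0 * Y = Y' * S_blk 0 0" .
qed

end

context corner_3_m
begin

lemma wild_rep_intertwiner_shape:
  assumes "X \<in> carrier_mat r r" "Y \<in> carrier_mat r r" "X' \<in> carrier_mat r r" "Y' \<in> carrier_mat r r"
    and "S \<in> carrier_mat (9 * r) (9 * r)"
    and "\<forall>f \<in> corner n {3, m}. S * wild_rep r X Y f = wild_rep r X' Y' f * S"
  shows "block_shaped free_block 9 r S"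
    "blk r S 0 0 * X = X' * blk r S 0 0" "blk r S 0 0 * Y = Y' * blk r S 0 0"
proof -
  interpret wild_intertwiner m n r X Y X' Y' S
    using assms by unfold_locales auto
  show "block_shaped free_block 9 r S"
    "blk r S 0 0 * X = X' * blk r S 0 0" "blk r S 0 0 * Y = Y' * blk r S 0 0"
    using intertwiner_shape by blast+
qed

lemma rep_indec_wild_rep:
  assumes X: "X \<in> carrier_mat r r" and Y: "Y \<in> carrier_mat r r" and indec: "kxy_indec r X Y"
  shows "rep_indec n {3, m} (9 * r) (wild_rep r X Y)"
  unfolding rep_indec_def
proof (intro conjI ballI impI)
  show "0 < 9 * r"
    using indec unfolding kxy_indec_def by simp
  fix E assume E: "E \<in> carrier_mat (9 * r) (9 * r)"
    and endo: "(\<forall>f\<in>corner n {3, m}. E * wild_rep r X Y f = wild_rep r X Y f * E) \<and> E * E = E"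
  note shape = wild_rep_intertwiner_shape[OF X Y X Y E conjunct1[OF endo]]
  have "blk r E 0 0 * blk r E 0 0 = blk r E 0 0"
    using block_shaped_blk_mult[OF E E shape(1) shape(1) chain_free_free_block] endo by simp
  then have "blk r E 0 0 = 0\<^sub>m r r \<or> blk r E 0 0 = 1\<^sub>m r"
    using indec shape(2,3) unfolding kxy_indec_def by simp
  then show "E = 0\<^sub>m (9 * r) (9 * r) \<or> E = 1\<^sub>m (9 * r)"
    using block_shaped_idempotent[OF E shape(1) chain_free_free_block] endo by blast
qed

lemma kxy_iso_of_rep_iso:
  assumes X1: "X1 \<in> carrier_mat r r" and Y1: "Y1 \<in> carrier_mat r r"
    and X2: "X2 \<in> carrier_mat r' r'" and Y2: "Y2 \<in> carrier_mat r' r'"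
    and iso: "rep_iso n {3, m} (9 * r) (wild_rep r X1 Y1) (9 * r') (wild_rep r' X2 Y2)"
  shows "kxy_iso r X1 Y1 r' X2 Y2"
proof -
  have r': "r' = r"
    using iso unfolding rep_iso_def by simp
  obtain S where S: "S \<in> carrier_mat (9 * r) (9 * r)" and inv: "invertible_mat S"
    and ST: "\<forall>f\<in>corner n {3, m}. S * wild_rep r X1 Y1 f = wild_rep r X2 Y2 f * S"
    using iso unfolding rep_iso_def r' by blast
  obtain B where B: "B \<in> carrier_mat (9 * r) (9 * r)"
    and SB: "S * B = 1\<^sub>m (9 * r)" and BS: "B * S = 1\<^sub>m (9 * r)"
    using invertible_matE[OF inv S] by blast
  have BT: "\<forall>f\<in>corner n {3, m}. B * wild_rep r X2 Y2 f = wild_rep r X1 Y1 f * B"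
    using inverse_intertwines[OF S B tensor_rep_carrier tensor_rep_carrier SB BS] ST by blast
  note X2 = X2[unfolded r'] and Y2 = Y2[unfolded r']
  note S_shape = wild_rep_intertwiner_shape[OF X1 Y1 X2 Y2 S ST]
  note B_shape = wild_rep_intertwiner_shape[OF X2 Y2 X1 Y1 B BT]
  have "blk r S 0 0 * blk r B 0 0 = 1\<^sub>m r"
    using block_shaped_blk_mult[OF S B S_shape(1) B_shape(1) chain_free_free_block] SB
    by (simp add: blk_one_mat)
  moreover have "blk r B 0 0 * blk r S 0 0 = 1\<^sub>m r"
    using block_shaped_blk_mult[OF B S B_shape(1) S_shape(1) chain_free_free_block] BS
    by (simp add: blk_one_mat)
  ultimately have "invertible_mat (blk r S 0 0)"
    by (intro invertible_matI[of _ r "blk r B 0 0"]) simp_all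
  then show ?thesis
    unfolding kxy_iso_def r' using S_shape(2,3) blk_carrier by blast
qed

end

theorem lemma2:
  fixes m n :: nat
  assumes "alg_closed TYPE('k::field)"
    and "4 < m" and "m \<le> n"
  shows "wild_corner TYPE('k) n {3, m}"
proof -
  interpret corner_3_m m n
    using assms(2,3) by unfold_locales
  show ?thesis
    unfolding wild_corner_def
    by (intro exI[of _ 9] exI[of _ wild_bimod] conjI allI impI
        is_bimod_wild_bimod rep_indec_wild_rep kxy_iso_of_rep_iso) assumption+
qed

end
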